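(* Let $\alpha>-1$, $d\in\widetilde{D}$, $p=(L_n^{(\alpha+1)})_{n\in\mathbb{N}_0}$, $q=(L_n^{(\alpha)})_{n\in\mathbb{N}_0}$, and let $T=E_{p,d}$ be regarded as an operator in $H(q)$ with domain $\mathcal{P}_c$. Let $f=\sum_kf_kq_k\in H(q)$ be such that (i) $\lim_{n\to\infty}\sum_{u=1}^nf_u(d_u-d_{u-1})$ exists and is finite, say equal to $S$; (ii) the sequence $(g_k)_{k\in\mathbb{N}_0}$ defined by $g_0=S+f_0d_0$ and $g_k=S-\sum_{u=1}^kf_u(d_u-d_{u-1})+f_kd_k$ for $k\ge1$ is in $\ell_2$; (iii) $\lim_{n\to\infty}(n+1)|f_nd_n-g_n|^2=0$. Then $f\in D(\overline{T})$ and $g=\lim_{n\to\infty}\sum_{t=0}^ng_tq_t$ is the unique element of $H(q)$ such that $(f,g)\in G(\overline{T})$.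
   Context: $\mathcal{P}_c$ is the space of polynomials in one real variable with complex coefficients. For $\beta>-1$, $L_n^{(\beta)}(x)=\sum_{k=0}^n\frac{(-1)^k}{k!}\binom{n+\beta}{n-k}x^k$ is the generalized Laguerre polynomial. For a sequence $Q=(Q_n)$ of polynomials with $\deg Q_n=n$, $H(Q)$ is the completion of $\mathcal{P}_c$ with respect to the inner product making $(Q_n)$ orthonormal; $g\in H(Q)$ is written $g=\sum_kg_kQ_k$, $(g_k)\in\ell_2$. $\widetilde{D}$ is the set of non-constant sequences of non-zero complex numbers. For a polynomial sequence $p$ and $d\in\widetilde{D}$, $E_{p,d}$ is the linear map on $\mathcal{P}_c$ with $E_{p,d}(p_n)=d_np_n$. $\overline{T}$ denotes the closure of $T$, whose graph $G(\overline{T})$ is the closure of the graph of $T$ in $H(q)\times H(q)$. *)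

theory Defs
  imports "HOL-Analysis.Analysis" "HOL-Computational_Algebra.Polynomial"
begin

definition laguerre :: "real \<Rightarrow> nat \<Rightarrow> complex poly" where
  "laguerre \<beta> n = (\<Sum>k\<le>n. monom (complex_of_real ((-1)^k / fact k * ((real n + \<beta>) gchoose (n - k)))) k)"

definition basis_coeffs :: "(nat \<Rightarrow> complex poly) \<Rightarrow> complex poly \<Rightarrow> nat \<Rightarrow> complex" where
  "basis_coeffs Q P = (THE c. (\<forall>k>degree P. c k = 0) \<and> P = (\<Sum>k\<le>degree P. smult (c k) (Q k)))"

definition E_op :: "(nat \<Rightarrow> complex poly) \<Rightarrow> (nat \<Rightarrow> complex) \<Rightarrow> complex poly \<Rightarrow> complex poly" where
  "E_op p d P = (\<Sum>k\<le>degree P. smult (d k * basis_coeffs p P k) (p k))"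

text \<open>H(Q) is identified isometrically with l2 via g = sum_k g_k Q_k.\<close>
definition ell2 :: "(nat \<Rightarrow> complex) \<Rightarrow> bool" where
  "ell2 x \<longleftrightarrow> summable (\<lambda>k. (cmod (x k))^2)"

definition ell2_lim :: "(nat \<Rightarrow> nat \<Rightarrow> complex) \<Rightarrow> (nat \<Rightarrow> complex) \<Rightarrow> bool" where
  "ell2_lim X x \<longleftrightarrow> (\<forall>j. ell2 (\<lambda>k. X j k - x k)) \<and>
     (\<lambda>j. \<Sum>k. (cmod (X j k - x k))^2) \<longlonglongrightarrow> 0"

definition in_closed_graph :: "(nat \<Rightarrow> complex poly) \<Rightarrow> (complex poly \<Rightarrow> complex poly)
    \<Rightarrow> (nat \<Rightarrow> complex) \<Rightarrow> (nat \<Rightarrow> complex) \<Rightarrow> bool" where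
  "in_closed_graph Q T f g \<longleftrightarrow> ell2 f \<and> ell2 g \<and>
     (\<exists>P :: nat \<Rightarrow> complex poly.
        ell2_lim (\<lambda>j. basis_coeffs Q (P j)) f \<and> ell2_lim (\<lambda>j. basis_coeffs Q (T (P j))) g)"

definition closure_domain :: "(nat \<Rightarrow> complex poly) \<Rightarrow> (complex poly \<Rightarrow> complex poly)
    \<Rightarrow> (nat \<Rightarrow> complex) set" where
  "closure_domain Q T = {f. \<exists>g. in_closed_graph Q T f g}"

end

theory Submission
  imports Defs
begin

text \<open>
  Since L_n^(\<alpha>+1) = \<Sum>_{k\<le>n} L_k^(\<alpha>), a polynomial with q-coordinates c has
  p-coordinates c_k - c_{k+1}, so E_{p,d} acts on q-coordinates by
  c \<mapsto> (\<Sum>_{k\<ge>j} d_k (c_k - c_{k+1}))_j. Passing to coordinatewise limits, every g with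
  (f, g) in the closed graph satisfies g_k - g_{k+1} = d_k (f_k - f_{k+1}); two square-summable
  solutions differ by a constant, which must vanish, so g is unique.
  The given g solves this recursion, and E_{p,d} maps the truncation of f at N to the
  coordinates g_j + (f_N d_N - g_N) for j \<le> N; their squared distance to g is
  (N + 1) |f_N d_N - g_N|^2 plus a tail of \<Sum> |g_k|^2, which tends to 0 by (iii).
\<close>

lemma coeff_laguerre:
  "coeff (laguerre b n) i =
     (if i \<le> n then complex_of_real ((-1)^i / fact i * ((real n + b) gchoose (n - i))) else 0)"
  unfolding laguerre_def by (simp add: coeff_sum coeff_monom)

lemma degree_laguerre_le: "degree (laguerre b n) \<le> n"
  by (rule degree_le) (simp add: coeff_laguerre)

lemma coeff_laguerre_diagonal_nonzero: "coeff (laguerre b n) n \<noteq> 0"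
  by (simp add: coeff_laguerre)

lemma gbinomial_shifted_sum:
  assumes "i \<le> n"
  shows "(\<Sum>k=i..n. (real k + b) gchoose (k - i)) = (real n + (b + 1)) gchoose (n - i)"
proof -
  have "(\<Sum>k=i..n. (real k + b) gchoose (k - i)) = (\<Sum>m\<le>n-i. ((real i + b) + of_nat m) gchoose m)"
    by (rule sum.reindex_bij_witness[of _ "\<lambda>m. i + m" "\<lambda>k. k - i"]) (use assms in \<open>auto simp: algebra_simps\<close>)
  also have "\<dots> = ((real i + b) + of_nat (n - i) + 1) gchoose (n - i)"
    by (rule gbinomial_parallel_sum)
  finally show ?thesis
    using assms by (simp add: algebra_simps)
qed

lemma laguerre_succ_eq_sum: "laguerre (b + 1) n = (\<Sum>k\<le>n. laguerre b k)"
proof (rule poly_eqI)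
  fix i
  show "coeff (laguerre (b + 1) n) i = coeff (\<Sum>k\<le>n. laguerre b k) i"
  proof (cases "i \<le> n")
    case True
    have "coeff (\<Sum>k\<le>n. laguerre b k) i
        = (\<Sum>k=i..n. complex_of_real ((-1)^i / fact i * ((real k + b) gchoose (k - i))))"
      unfolding coeff_sum by (rule sum.mono_neutral_cong_right) (auto simp: coeff_laguerre)
    also have "\<dots> = complex_of_real ((-1)^i / fact i * (\<Sum>k=i..n. (real k + b) gchoose (k - i)))"
      by (simp add: sum_distrib_left)
    also have "\<dots> = coeff (laguerre (b + 1) n) i"
      using True by (simp add: coeff_laguerre gbinomial_shifted_sum)
    finally show ?thesis ..
  next
    case False
    then show ?thesis by (simp add: coeff_laguerre coeff_sum)
  qed
qed

locale triangular_basis =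
  fixes Q :: "nat \<Rightarrow> complex poly"
  assumes degree_basis_le: "degree (Q k) \<le> k"
    and coeff_basis_diagonal_nonzero: "coeff (Q k) k \<noteq> 0"
begin

lemma degree_sum_smult_le: "degree (\<Sum>k\<le>N. smult (c k) (Q k)) \<le> N"
proof (rule degree_sum_le)
  fix k assume "k \<in> {..N}"
  then show "degree (smult (c k) (Q k)) \<le> N"
    using degree_smult_le[of "c k" "Q k"] degree_basis_le[of k] by simp
qed simp

lemma sum_smult_eq_0_imp_coeff_eq_0:
  assumes "(\<Sum>k\<le>N. smult (c k) (Q k)) = 0" and "k \<le> N"
  shows "c k = 0"
  using assms
proof (induction N arbitrary: k)
  case 0
  then show ?case using coeff_basis_diagonal_nonzero[of 0] by auto
next
  case (Suc N)
  have "coeff (Q k) (Suc N) = 0" if "k \<le> N" for k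
    using degree_basis_le[of k] that by (intro coeff_eq_0) simp
  then have "0 = c (Suc N) * coeff (Q (Suc N)) (Suc N)"
    using arg_cong[OF Suc.prems(1), of "\<lambda>P. coeff P (Suc N)"] by (simp add: coeff_sum atMost_Suc)
  then have "c (Suc N) = 0"
    using coeff_basis_diagonal_nonzero[of "Suc N"] by simp
  moreover from this have "(\<Sum>k\<le>N. smult (c k) (Q k)) = 0"
    using Suc.prems(1) by (simp add: atMost_Suc)
  ultimately show ?case
    using Suc.IH[of k] Suc.prems(2) by (cases "k = Suc N") auto
qed

lemma sum_smult_eq_imp_coeff_eq:
  assumes "(\<Sum>k\<le>N. smult (a k) (Q k)) = (\<Sum>k\<le>N. smult (b k) (Q k))" and "k \<le> N"
  shows "a k = b k"
proof -
  have "(\<Sum>k\<le>N. smult (a k - b k) (Q k)) = 0"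
    using assms(1) by (simp add: smult_diff_left sum_subtractf)
  then show ?thesis
    using sum_smult_eq_0_imp_coeff_eq_0[of "\<lambda>k. a k - b k" N k] assms(2) by simp
qed

lemma exists_expansion: "degree P \<le> n \<Longrightarrow> \<exists>c. P = (\<Sum>k\<le>n. smult (c k) (Q k))"
proof (induction n arbitrary: P)
  case 0
  have "degree (Q 0) = 0" "Q 0 \<noteq> 0"
    using degree_basis_le[of 0] coeff_basis_diagonal_nonzero[of 0] by auto
  with 0 have "P = smult (coeff P 0 / coeff (Q 0) 0) (Q 0)"
    by (auto elim!: degree_eq_zeroE)
  then show ?case by (intro exI[of _ "\<lambda>_. coeff P 0 / coeff (Q 0) 0"]) simp
next
  case (Suc n)
  define a where "a = coeff P (Suc n) / coeff (Q (Suc n)) (Suc n)"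
  have "degree (P - smult a (Q (Suc n))) \<le> n"
  proof (rule degree_le, intro allI impI)
    fix i assume "n < i"
    then consider "i = Suc n" | "Suc n < i" by linarith
    then show "coeff (P - smult a (Q (Suc n))) i = 0"
    proof cases
      case 1
      then show ?thesis using coeff_basis_diagonal_nonzero[of "Suc n"] by (simp add: a_def)
    next
      case 2
      then show ?thesis
        using Suc.prems degree_basis_le[of "Suc n"] by (simp add: coeff_eq_0)
    qed
  qed
  then obtain c where "P - smult a (Q (Suc n)) = (\<Sum>k\<le>n. smult (c k) (Q k))"
    using Suc.IH by blast
  moreover have "(\<Sum>k\<le>n. smult ((c(Suc n := a)) k) (Q k)) = (\<Sum>k\<le>n. smult (c k) (Q k))"
    by (rule sum.cong) auto
  ultimately have "P = (\<Sum>k\<le>Suc n. smult ((c(Suc n := a)) k) (Q k))"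
    by (simp add: atMost_Suc algebra_simps)
  then show ?case by blast
qed

lemma basis_coeffs_spec:
  "(\<forall>k>degree P. basis_coeffs Q P k = 0) \<and> P = (\<Sum>k\<le>degree P. smult (basis_coeffs Q P k) (Q k))"
proof -
  have "\<exists>!c. (\<forall>k>degree P. c k = 0) \<and> P = (\<Sum>k\<le>degree P. smult (c k) (Q k))"
  proof (rule ex_ex1I)
    obtain c where c: "P = (\<Sum>k\<le>degree P. smult (c k) (Q k))"
      using exists_expansion by blast
    define c' where "c' k = (if k \<le> degree P then c k else 0)" for k
    have "P = (\<Sum>k\<le>degree P. smult (c' k) (Q k))"
      by (rule trans[OF c sum.cong]) (simp_all add: c'_def)
    moreover have "\<forall>k>degree P. c' k = 0"
      by (simp add: c'_def)
    ultimately show "\<exists>c. (\<forall>k>degree P. c k = 0) \<and> P = (\<Sum>k\<le>degree P. smult (c k) (Q k))"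
      by blast
  next
    fix c1 c2
    assume c1: "(\<forall>k>degree P. c1 k = 0) \<and> P = (\<Sum>k\<le>degree P. smult (c1 k) (Q k))"
      and c2: "(\<forall>k>degree P. c2 k = 0) \<and> P = (\<Sum>k\<le>degree P. smult (c2 k) (Q k))"
    have eq: "(\<Sum>k\<le>degree P. smult (c1 k) (Q k)) = (\<Sum>k\<le>degree P. smult (c2 k) (Q k))"
      using conjunct2[OF c1, symmetric] conjunct2[OF c2] by (rule trans)
    show "c1 = c2"
    proof
      fix k
      show "c1 k = c2 k"
      proof (cases "k \<le> degree P")
        case True
        then show ?thesis by (rule sum_smult_eq_imp_coeff_eq[OF eq])
      next
        case False
        then show ?thesis using conjunct1[OF c1] conjunct1[OF c2] by simp
      qed
    qed
  qed
  then show ?thesis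
    unfolding basis_coeffs_def by (rule theI')
qed

lemma basis_coeffs_eq_0: "degree P < k \<Longrightarrow> basis_coeffs Q P k = 0"
  using basis_coeffs_spec by blast

lemma basis_coeffs_expansion:
  assumes "degree P \<le> N"
  shows "P = (\<Sum>k\<le>N. smult (basis_coeffs Q P k) (Q k))"
proof -
  have "P = (\<Sum>k\<le>degree P. smult (basis_coeffs Q P k) (Q k))"
    using basis_coeffs_spec by blast
  also have "\<dots> = (\<Sum>k\<le>N. smult (basis_coeffs Q P k) (Q k))"
    by (rule sum.mono_neutral_left) (use assms basis_coeffs_eq_0 in auto)
  finally show ?thesis .
qed

lemma basis_coeffs_sum_smult:
  "basis_coeffs Q (\<Sum>k\<le>N. smult (c k) (Q k)) j = (if j \<le> N then c j else 0)"
proof -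
  define P where "P = (\<Sum>k\<le>N. smult (c k) (Q k))"
  have deg: "degree P \<le> N"
    unfolding P_def by (rule degree_sum_smult_le)
  have eq: "(\<Sum>k\<le>N. smult (c k) (Q k)) = (\<Sum>k\<le>N. smult (basis_coeffs Q P k) (Q k))"
    using P_def[symmetric] basis_coeffs_expansion[OF deg] by (rule trans)
  show ?thesis
    unfolding P_def[symmetric]
    using sum_smult_eq_imp_coeff_eq[OF eq, of j] basis_coeffs_eq_0[of P j] deg by auto
qed

end

lemma smult_sum_right: "smult a (sum f A) = (\<Sum>x\<in>A. smult a (f x))"
  by (induction A rule: infinite_finite_induct) (simp_all add: smult_add_right)

lemma sum_smult_partial_sums:
  fixes q :: "nat \<Rightarrow> 'a::comm_ring_1 poly"
  shows "(\<Sum>k\<le>N. smult (a k) (\<Sum>j\<le>k. q j)) = (\<Sum>j\<le>N. smult (\<Sum>k=j..N. a k) (q j))"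
proof -
  have "(\<Sum>k\<le>N. smult (a k) (\<Sum>j\<le>k. q j)) = (\<Sum>k\<le>N. \<Sum>j | j \<in> {..N} \<and> j \<le> k. smult (a k) (q j))"
  proof (rule sum.cong)
    fix k assume "k \<in> {..N}"
    then have "{j. j \<in> {..N} \<and> j \<le> k} = {..k}" by auto
    then show "smult (a k) (\<Sum>j\<le>k. q j) = (\<Sum>j | j \<in> {..N} \<and> j \<le> k. smult (a k) (q j))"
      by (simp add: smult_sum_right)
  qed simp
  also have "\<dots> = (\<Sum>j\<le>N. \<Sum>k | k \<in> {..N} \<and> j \<le> k. smult (a k) (q j))"
    by (rule sum.swap_restrict) simp_all
  also have "\<dots> = (\<Sum>j\<le>N. smult (\<Sum>k=j..N. a k) (q j))"
    by (intro sum.cong) (auto simp: smult_sum intro: sum.cong)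
  finally show ?thesis .
qed

lemma ell2_imp_tendsto_zero:
  assumes "ell2 x"
  shows "x \<longlonglongrightarrow> 0"
proof (rule Lim_null_comparison)
  show "\<forall>\<^sub>F k in sequentially. norm (x k) \<le> sqrt ((cmod (x k))^2)"
    by simp
  show "(\<lambda>k. sqrt ((cmod (x k))^2)) \<longlonglongrightarrow> 0"
    using tendsto_real_sqrt[OF summable_LIMSEQ_zero] assms unfolding ell2_def by fastforce
qed

lemma ell2_lim_imp_tendsto_coordinate:
  assumes "ell2_lim X x"
  shows "(\<lambda>j. X j k) \<longlonglongrightarrow> x k"
proof -
  let ?dist = "\<lambda>j. \<Sum>i. (cmod (X j i - x i))^2"
  have "(\<lambda>j. X j k - x k) \<longlonglongrightarrow> 0"
  proof (rule Lim_null_comparison)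
    have "(cmod (X j k - x k))^2 \<le> ?dist j" for j
    proof -
      have "summable (\<lambda>i. (cmod (X j i - x i))^2)"
        using assms unfolding ell2_lim_def ell2_def by blast
      from sum_le_suminf[OF this, of "{k}"] show ?thesis
        by simp
    qed
    then show "\<forall>\<^sub>F j in sequentially. norm (X j k - x k) \<le> sqrt (?dist j)"
      by (intro always_eventually allI) (simp add: real_le_rsqrt)
    show "(\<lambda>j. sqrt (?dist j)) \<longlonglongrightarrow> 0"
      using tendsto_real_sqrt[of ?dist 0] assms unfolding ell2_lim_def by simp
  qed
  then show ?thesis
    by (rule LIM_zero_cancel)
qed

lemma ell2_lim_shifted_truncations:
  assumes g: "ell2 g" and a: "(\<lambda>N. (real N + 1) * (cmod (a N))^2) \<longlonglongrightarrow> 0"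
  shows "ell2_lim (\<lambda>N k. if k \<le> N then g k + a N else 0) g"
proof -
  let ?G = "\<lambda>k. (cmod (g k))^2"
  let ?err = "\<lambda>N k. (cmod ((if k \<le> N then g k + a N else 0) - g k))^2"
  let ?bound = "\<lambda>N. (real N + 1) * (cmod (a N))^2 + (suminf ?G - (\<Sum>k\<le>N. ?G k))"
  have G: "summable ?G"
    using g by (simp add: ell2_def)
  have err: "?err N sums ?bound N" for N
  proof -
    have "(\<lambda>k. (if k \<in> {..N} then (cmod (a N))^2 else 0) + (?G k - (if k \<in> {..N} then ?G k else 0)))
        sums ((\<Sum>k\<le>N. (cmod (a N))^2) + (suminf ?G - (\<Sum>k\<le>N. ?G k)))"
      by (intro sums_add sums_diff summable_sums G sums_If_finite_set) simp_all
    then have "?err N sums ((\<Sum>k\<le>N. (cmod (a N))^2) + (suminf ?G - (\<Sum>k\<le>N. ?G k)))"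
      by (rule sums_cong[THEN iffD1, rotated]) simp
    then show ?thesis
      by (simp add: algebra_simps)
  qed
  have "?bound \<longlonglongrightarrow> 0 + (suminf ?G - suminf ?G)"
    by (intro tendsto_add a tendsto_diff tendsto_const summable_LIMSEQ' G)
  moreover have "(\<lambda>N. \<Sum>k. ?err N k) = ?bound"
    using err by (intro ext) (rule sums_unique[symmetric])
  ultimately show ?thesis
    unfolding ell2_lim_def ell2_def using err sums_summable by auto
qed

lemma ell2_lim_truncations:
  assumes "ell2 f"
  shows "ell2_lim (\<lambda>N k. if k \<le> N then f k else 0) f"
proof -
  have "ell2_lim (\<lambda>N k. if k \<le> N then f k + 0 else 0) f"
    by (rule ell2_lim_shifted_truncations[OF assms]) simp
  then show ?thesis
    unfolding add_0_right .
qed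

lemma ell2_eq_if_differences_eq:
  assumes g: "ell2 g" and h: "ell2 h" and diff: "\<And>k. g k - g (Suc k) = h k - h (Suc k)"
  shows "g = h"
proof -
  have "g k - h k = g 0 - h 0" for k
  proof (induction k)
    case (Suc k)
    have "g (Suc k) - h (Suc k) = g k - h k"
      using diff[of k] by algebra
    with Suc show ?case by simp
  qed simp
  then have const: "(\<lambda>k. g k - h k) = (\<lambda>_. g 0 - h 0)"
    by (rule ext)
  have "(\<lambda>k. g k - h k) \<longlonglongrightarrow> 0 - 0"
    by (intro tendsto_diff ell2_imp_tendsto_zero g h)
  then have "g 0 - h 0 = 0"
    unfolding const by (simp add: LIMSEQ_const_iff)
  show ?thesis
  proof
    fix k
    show "g k = h k"
      using fun_cong[OF const, of k] \<open>g 0 - h 0 = 0\<close> by simp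
  qed
qed

locale partial_sum_bases = p: triangular_basis p + q: triangular_basis q for p q +
  assumes p_eq_sum: "p k = (\<Sum>j\<le>k. q j)"
begin

lemma basis_coeffs_E_op:
  assumes "degree P \<le> N"
  shows "basis_coeffs q (E_op p d P) j
         = (\<Sum>k=j..N. d k * (basis_coeffs q P k - basis_coeffs q P (Suc k)))"
proof -
  let ?c = "basis_coeffs q P"
  \<comment> \<open>Abel summation turns the \<open>q\<close>-expansion of \<open>P\<close> into its \<open>p\<close>-expansion, on which \<open>E_op\<close> is diagonal.\<close>
  have "P = (\<Sum>k\<le>N. smult (?c k) (q k))"
    using assms by (rule q.basis_coeffs_expansion)
  also have "\<dots> = (\<Sum>k\<le>N. smult (?c k - ?c (Suc k)) (p k))"
  proof -
    have "(\<Sum>k=j..N. ?c k - ?c (Suc k)) = ?c j" if "j \<le> N" for j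
      using sum_Suc_diff[of j N "\<lambda>k. - ?c k"] q.basis_coeffs_eq_0[of P "Suc N"] assms that by simp
    then show ?thesis
      unfolding p_eq_sum sum_smult_partial_sums by (intro sum.cong) auto
  qed
  finally have coeffs_p: "basis_coeffs p P k = (if k \<le> N then ?c k - ?c (Suc k) else 0)" for k
    by (metis p.basis_coeffs_sum_smult)
  have "E_op p d P = (\<Sum>k\<le>N. smult (d k * basis_coeffs p P k) (p k))"
    unfolding E_op_def by (rule sum.mono_neutral_left) (use assms p.basis_coeffs_eq_0 in auto)
  also have "\<dots> = (\<Sum>k\<le>N. smult (d k * (?c k - ?c (Suc k))) (p k))"
    by (intro sum.cong) (simp_all add: coeffs_p)
  also have "\<dots> = (\<Sum>j\<le>N. smult (\<Sum>k=j..N. d k * (?c k - ?c (Suc k))) (q j))"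
    unfolding p_eq_sum by (rule sum_smult_partial_sums)
  finally show ?thesis
    by (simp add: q.basis_coeffs_sum_smult)
qed

lemma basis_coeffs_E_op_diff:
  "basis_coeffs q (E_op p d P) j - basis_coeffs q (E_op p d P) (Suc j)
   = d j * (basis_coeffs q P j - basis_coeffs q P (Suc j))"
proof (cases "j \<le> degree P")
  case True
  then have "{j..degree P} = insert j {Suc j..degree P}" by auto
  then show ?thesis using basis_coeffs_E_op[where P=P and d=d, OF order_refl] by simp
next
  case False
  then show ?thesis using basis_coeffs_E_op[where P=P and d=d, OF order_refl] q.basis_coeffs_eq_0[of P] by simp
qed

lemma in_closed_graph_E_op_differences:
  assumes "in_closed_graph q (E_op p d) f g"
  shows "g k - g (Suc k) = d k * (f k - f (Suc k))"
proof -
  obtain P where P: "ell2_lim (\<lambda>j. basis_coeffs q (P j)) f"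
    and EP: "ell2_lim (\<lambda>j. basis_coeffs q (E_op p d (P j))) g"
    using assms unfolding in_closed_graph_def by blast
  have "(\<lambda>j. basis_coeffs q (E_op p d (P j)) k - basis_coeffs q (E_op p d (P j)) (Suc k))
      \<longlonglongrightarrow> g k - g (Suc k)"
    by (intro tendsto_diff ell2_lim_imp_tendsto_coordinate[OF EP])
  moreover have "(\<lambda>j. d k * (basis_coeffs q (P j) k - basis_coeffs q (P j) (Suc k)))
      \<longlonglongrightarrow> d k * (f k - f (Suc k))"
    by (intro tendsto_intros ell2_lim_imp_tendsto_coordinate[OF P])
  ultimately show ?thesis
    unfolding basis_coeffs_E_op_diff by (rule LIMSEQ_unique)
qed

lemma basis_coeffs_E_op_truncation:
  assumes diff: "\<And>k. g k - g (Suc k) = d k * (f k - f (Suc k))"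
  shows "basis_coeffs q (E_op p d (\<Sum>k\<le>N. smult (f k) (q k))) j
         = (if j \<le> N then g j + (f N * d N - g N) else 0)"
proof -
  let ?c = "basis_coeffs q (\<Sum>k\<le>N. smult (f k) (q k))"
  have "basis_coeffs q (E_op p d (\<Sum>k\<le>N. smult (f k) (q k))) j
      = (\<Sum>k=j..N. d k * (?c k - ?c (Suc k)))"
    by (rule basis_coeffs_E_op[OF q.degree_sum_smult_le])
  also have "\<dots> = (if j \<le> N then (\<Sum>k=j..<N. g k - g (Suc k)) + f N * d N else 0)"
    by (auto simp: sum.last_plus q.basis_coeffs_sum_smult diff intro!: sum.cong)
  also have "\<dots> = (if j \<le> N then g j + (f N * d N - g N) else 0)"
    using sum_Suc_diff'[of j N "\<lambda>k. - g k"] by auto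
  finally show ?thesis .
qed

lemma in_closed_graph_E_op:
  assumes f: "ell2 f" and g: "ell2 g"
    and diff: "\<And>k. g k - g (Suc k) = d k * (f k - f (Suc k))"
    and lim: "(\<lambda>N. (real N + 1) * (cmod (f N * d N - g N))^2) \<longlonglongrightarrow> 0"
  shows "in_closed_graph q (E_op p d) f g"
proof -
  define P where "P N = (\<Sum>k\<le>N. smult (f k) (q k))" for N
  have coeffs: "(\<lambda>N. basis_coeffs q (P N)) = (\<lambda>N k. if k \<le> N then f k else 0)"
    by (intro ext) (simp add: P_def q.basis_coeffs_sum_smult)
  have E_coeffs: "(\<lambda>N. basis_coeffs q (E_op p d (P N)))
      = (\<lambda>N k. if k \<le> N then g k + (f N * d N - g N) else 0)"
    by (intro ext) (simp add: P_def basis_coeffs_E_op_truncation[where f=f and g=g and d=d, OF diff])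
  have "ell2_lim (\<lambda>N. basis_coeffs q (P N)) f"
    unfolding coeffs by (rule ell2_lim_truncations[OF f])
  moreover have "ell2_lim (\<lambda>N. basis_coeffs q (E_op p d (P N))) g"
    unfolding E_coeffs by (rule ell2_lim_shifted_truncations[OF g lim])
  ultimately show ?thesis
    unfolding in_closed_graph_def using f g by blast
qed

end

theorem theorem7:
  fixes \<alpha> :: real and d f g :: "nat \<Rightarrow> complex" and S :: complex
    and p q :: "nat \<Rightarrow> complex poly"
  assumes alpha: "\<alpha> > -1"
    and d_nonzero: "\<forall>n. d n \<noteq> 0"
    and d_nonconst: "\<not> (\<exists>c. \<forall>n. d n = c)"
    and p_def: "p = laguerre (\<alpha> + 1)"
    and q_def: "q = laguerre \<alpha>"
    and f_ell2: "ell2 f"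
    and lim_S: "(\<lambda>n. \<Sum>u=1..n. f u * (d u - d (u - 1))) \<longlonglongrightarrow> S"
    and g_def: "g = (\<lambda>k. if k = 0 then S + f 0 * d 0
                     else S - (\<Sum>u=1..k. f u * (d u - d (u - 1))) + f k * d k)"
    and g_ell2: "ell2 g"
    and lim0: "(\<lambda>n. (real n + 1) * (cmod (f n * d n - g n))^2) \<longlonglongrightarrow> 0"
  shows "f \<in> closure_domain q (E_op p d)
         \<and> in_closed_graph q (E_op p d) f g
         \<and> (\<forall>g'. in_closed_graph q (E_op p d) f g' \<longrightarrow> g' = g)"
proof -
  interpret partial_sum_bases p q
    unfolding p_def q_def
    by unfold_locales (rule degree_laguerre_le coeff_laguerre_diagonal_nonzero laguerre_succ_eq_sum)+
  have g_diff: "g k - g (Suc k) = d k * (f k - f (Suc k))" for k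
    by (cases k) (simp_all add: g_def algebra_simps)
  have graph: "in_closed_graph q (E_op p d) f g"
    using f_ell2 g_ell2 g_diff lim0 by (rule in_closed_graph_E_op)
  have "g' = g" if "in_closed_graph q (E_op p d) f g'" for g'
  proof (rule ell2_eq_if_differences_eq)
    show "ell2 g'" using that unfolding in_closed_graph_def by blast
    show "ell2 g" by (fact g_ell2)
    show "g' k - g' (Suc k) = g k - g (Suc k)" for k
      using in_closed_graph_E_op_differences[OF that] g_diff by simp
  qed
  with graph show ?thesis
    unfolding closure_domain_def by blast
qed

end
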